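(* In the setting below, for every probability measure $\mathbb{Q}$ on $\mathcal{F}$, $$\inf_{D}L_D(D,\mathbb{Q}) = a-\tfrac{a}{2}\,\big\|\mathbb{P}^+-\big(\gamma\mathbb{Q}+(1-\gamma)\mathbb{P}^-\big)\big\|_{TV},$$ the infimum being over measurable $D:\mathcal{F}\to[0,+\infty)$ and being attained by some $D$ with values in $[0,a]$. Moreover $\big\|\mathbb{P}^+-(\gamma\mathbb{Q}+(1-\gamma)\mathbb{P}^-)\big\|_{TV}\ge 2(1-\gamma)$ for every $\mathbb{Q}$, with equality when $\mathbb{Q}=\mathbb{P}^+$.
   Context: $(\mathcal{F},\Sigma)$ is a measurable space, $\mathbb{P}^+,\mathbb{P}^-$ are mutually singular probability measures on it (there is a measurable $S$ with $\mathbb{P}^+(S)=1$, $\mathbb{P}^-(S)=0$), $a>0$, $\gamma\in(0,1]$, and for measurable $D:\mathcal{F}\to[0,\infty)$ and probability measure $\mathbb{Q}$, $L_D(D,\mathbb{Q})=\mathbb{E}_{\mathbb{P}^+}D+\gamma\,\mathbb{E}_{\mathbb{Q}}\max(0,a-D)+(1-\gamma)\,\mathbb{E}_{\mathbb{P}^-}\max(0,a-D)$. For probability measures $\mathbb{P}_1,\mathbb{P}_2$, $\|\mathbb{P}_1-\mathbb{P}_2\|_{TV}$ is the total variation norm $|\mu|(\mathcal{F})$ of $\mu=\mathbb{P}_1-\mathbb{P}_2$ (equivalently $\int|p_1-p_2|\,d\nu$). *)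

theory Defs
  imports "HOL-Probability.Probability"
begin

definition meas_partitions :: "'a measure \<Rightarrow> 'a set set set" where
  "meas_partitions M = {P. finite P \<and> P \<subseteq> sets M \<and> disjoint P \<and> \<Union>P = space M}"

definition tv_norm :: "'a measure \<Rightarrow> ('a set \<Rightarrow> real) \<Rightarrow> real" where
  "tv_norm M \<mu> = (SUP P\<in>meas_partitions M. \<Sum>A\<in>P. \<bar>\<mu> A\<bar>)"

definition tv_dist :: "'a measure \<Rightarrow> ('a set \<Rightarrow> real) \<Rightarrow> ('a set \<Rightarrow> real) \<Rightarrow> real" where
  "tv_dist M P1 P2 = tv_norm M (\<lambda>A. P1 A - P2 A)"

definition loss_D :: "'a measure \<Rightarrow> 'a measure \<Rightarrow> real \<Rightarrow> real \<Rightarrow> ('a \<Rightarrow> real) \<Rightarrow> 'a measure \<Rightarrow> ennreal" where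
  "loss_D Pp Pm a \<gamma> D Q =
     (\<integral>\<^sup>+ x. ennreal (D x) \<partial>Pp)
     + ennreal \<gamma> * (\<integral>\<^sup>+ x. ennreal (max 0 (a - D x)) \<partial>Q)
     + ennreal (1 - \<gamma>) * (\<integral>\<^sup>+ x. ennreal (max 0 (a - D x)) \<partial>Pm)"

end

theory Submission
  imports Defs
begin

text \<open>Let \<open>R = \<gamma>Q + (1 - \<gamma>)P\<^sup>-\<close> and write \<open>P\<^sup>+\<close> and \<open>R\<close> as densities \<open>p\<close>, \<open>r\<close> with respect to
  \<open>P\<^sup>+ + R\<close>. Then \<open>L\<^sub>D(D, Q) = \<integral> (D p + (a - D)\<^sup>+ r)\<close>, and pointwise \<open>d p + (a - d)\<^sup>+ r \<ge> a min(p, r)\<close>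
  for \<open>d \<ge> 0\<close>, with equality at \<open>d = a\<close> on \<open>H = {p < r}\<close> and \<open>d = 0\<close> off \<open>H\<close>. So \<open>a 1\<^sub>H\<close> is an optimal
  discriminator, with loss \<open>a (1 - (R H - P\<^sup>+ H))\<close>. As \<open>H\<close> is a Hahn set of \<open>R - P\<^sup>+\<close>, every
  partition sum is bounded by the one of \<open>{H, -H}\<close>, so \<open>\<parallel>P\<^sup>+ - R\<parallel>\<^sub>T\<^sub>V = 2 (R H - P\<^sup>+ H) = 2 max\<^sub>B (R B - P\<^sup>+ B)\<close>.
  Taking \<open>B\<close> the complement of the set separating \<open>P\<^sup>+\<close> from \<open>P\<^sup>-\<close> gives the bound \<open>2 (1 - \<gamma>)\<close>; for
  \<open>Q = P\<^sup>+\<close> one has \<open>R H - P\<^sup>+ H = (1 - \<gamma>)(P\<^sup>- H - P\<^sup>+ H) \<le> 1 - \<gamma>\<close>.\<close>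

section \<open>Sums of measures\<close>

definition add_measure :: "'a measure \<Rightarrow> 'a measure \<Rightarrow> 'a measure" where
  "add_measure A B = measure_of (space A) (sets A) (\<lambda>X. emeasure A X + emeasure B X)"

lemma space_add_measure [simp]: "space (add_measure A B) = space A"
  and sets_add_measure [simp, measurable_cong]: "sets (add_measure A B) = sets A"
  by (simp_all add: add_measure_def)

lemma emeasure_add_measure [simp]:
  assumes "sets B = sets A"
  shows "emeasure (add_measure A B) X = emeasure A X + emeasure B X"
proof (cases "X \<in> sets A")
  case True
  have "countably_additive (sets A) (\<lambda>X. emeasure A X + emeasure B X)"
  proof (rule countably_additiveI)
    fix F :: "nat \<Rightarrow> 'a set" assume "range F \<subseteq> sets A" "disjoint_family F"
    then show "(\<Sum>i. emeasure A (F i) + emeasure B (F i))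
        = emeasure A (\<Union>i. F i) + emeasure B (\<Union>i. F i)"
      using assms by (simp add: suminf_add[OF summableI summableI, symmetric] suminf_emeasure)
  qed
  then show ?thesis
    unfolding add_measure_def using True
    by (intro emeasure_measure_of_sigma sets.sigma_algebra_axioms) (auto simp: positive_def)
next
  case False
  then show ?thesis using assms by (simp add: emeasure_notin_sets)
qed

lemma nn_integral_add_measure:
  assumes "sets B = sets A" and "f \<in> borel_measurable A"
  shows "(\<integral>\<^sup>+ x. f x \<partial>add_measure A B) = (\<integral>\<^sup>+ x. f x \<partial>A) + (\<integral>\<^sup>+ x. f x \<partial>B)"
  using assms(2)
proof induction
  case (cong f g)
  have "space B = space A" using assms(1) by (rule sets_eq_imp_space_eq)
  with cong show ?case by (simp cong: nn_integral_cong_simp)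
next
  case (set X)
  with assms(1) show ?case by simp
next
  case (mult f c)
  with assms(1) show ?case by (simp add: nn_integral_cmult distrib_left)
next
  case (add f g)
  with assms(1) show ?case by (simp add: nn_integral_add)
next
  case (seq U)
  have [measurable]: "U i \<in> borel_measurable B" for i
    using seq(1) assms(1) by (simp cong: measurable_cong_sets)
  have [measurable]: "U i \<in> borel_measurable (add_measure A B)" for i
    using seq(1) by simp
  from seq assms(1) show ?case
    by (simp add: image_comp nn_integral_monotone_convergence_SUP incseq_nn_integral ennreal_SUP_add)
qed

section \<open>Total variation and Hahn sets\<close>

definition hahn_set :: "'a measure \<Rightarrow> 'a measure \<Rightarrow> 'a measure \<Rightarrow> 'a set \<Rightarrow> bool" where
  "hahn_set M P R H \<longleftrightarrow> H \<in> sets M \<and>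
     (\<forall>B\<in>sets M. B \<subseteq> H \<longrightarrow> measure P B \<le> measure R B) \<and>
     (\<forall>B\<in>sets M. B \<inter> H = {} \<longrightarrow> measure R B \<le> measure P B)"

lemma measure_partition_sum:
  assumes "finite_measure X" "sets X = sets M" "Pt \<in> meas_partitions M" "H \<in> sets M"
  shows "(\<Sum>A\<in>Pt. measure X (A \<inter> H)) = measure X H"
proof -
  have Pt: "finite Pt" "Pt \<subseteq> sets M" "disjoint Pt" "\<Union>Pt = space M"
    using assms(3) by (auto simp: meas_partitions_def)
  have "H \<subseteq> space M" using assms(4) sets.sets_into_space by blast
  with Pt(4) have "(\<Union>A\<in>Pt. A \<inter> H) = H" by blast
  moreover have "measure X (\<Union>A\<in>Pt. A \<inter> H) = (\<Sum>A\<in>Pt. measure X (A \<inter> H))"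
    using Pt assms(1,2,4)
    by (intro finite_measure.finite_measure_finite_Union)
       (auto simp: disjoint_family_on_def disjoint_def)
  ultimately show ?thesis by simp
qed

lemma finite_measure_split:
  assumes "finite_measure X" "A \<in> sets X" "B \<in> sets X"
  shows "measure X A = measure X (A \<inter> B) + measure X (A - B)"
  using finite_measure.finite_measure_Diff'[OF assms] by simp

lemma set_compl_in_meas_partitions: "H \<in> sets M \<Longrightarrow> {H, space M - H} \<in> meas_partitions M"
  using sets.sets_into_space by (auto simp: meas_partitions_def disjoint_def)

lemma tv_dist_hahn_set:
  assumes P: "finite_measure P" "sets P = sets M" and R: "finite_measure R" "sets R = sets M"
    and "hahn_set M P R H"
  shows "tv_dist M (measure P) (measure R)
    = (measure R H - measure P H) + (measure P (space M - H) - measure R (space M - H))"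
    (is "_ = ?v")
proof -
  let ?f = "\<lambda>Pt. \<Sum>A\<in>Pt. \<bar>measure P A - measure R A\<bar>"
  let ?H' = "space M - H"
  have H: "H \<in> sets M" "?H' \<in> sets M" using assms(5) by (auto simp: hahn_set_def)
  have upper: "?f Pt \<le> ?v" if Pt: "Pt \<in> meas_partitions M" for Pt
  proof -
    have "?f Pt \<le> (\<Sum>A\<in>Pt. (measure R (A \<inter> H) - measure P (A \<inter> H))
                          + (measure P (A \<inter> ?H') - measure R (A \<inter> ?H')))"
    proof (rule sum_mono)
      fix A assume "A \<in> Pt"
      then have A: "A \<in> sets M" "A \<subseteq> space M"
        using Pt sets.sets_into_space by (auto simp: meas_partitions_def)
      have split: "measure X A = measure X (A \<inter> H) + measure X (A \<inter> ?H')"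
        if "finite_measure X" "sets X = sets M" for X
      proof -
        from A have "A \<inter> ?H' = A - H" by blast
        with finite_measure_split[of X A H] that A H show ?thesis by simp
      qed
      have "measure P (A \<inter> H) \<le> measure R (A \<inter> H)"
        using assms(5) A H by (simp add: hahn_set_def)
      moreover have "measure R (A \<inter> ?H') \<le> measure P (A \<inter> ?H')"
      proof -
        have "A \<inter> ?H' \<in> sets M" "A \<inter> ?H' \<inter> H = {}" using A H by auto
        with assms(5) show ?thesis by (simp add: hahn_set_def)
      qed
      moreover note split[OF P] split[OF R]
      ultimately
      show "\<bar>measure P A - measure R A\<bar> \<le> (measure R (A \<inter> H) - measure P (A \<inter> H))
                          + (measure P (A \<inter> ?H') - measure R (A \<inter> ?H'))"
        by linarith
    qed
    also have "\<dots> = ((\<Sum>A\<in>Pt. measure R (A \<inter> H)) - (\<Sum>A\<in>Pt. measure P (A \<inter> H)))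
                   + ((\<Sum>A\<in>Pt. measure P (A \<inter> ?H')) - (\<Sum>A\<in>Pt. measure R (A \<inter> ?H')))"
      by (simp only: sum.distrib sum_subtractf)
    also have "\<dots> = ?v"
      using measure_partition_sum[OF P Pt] measure_partition_sum[OF R Pt] H by simp
    finally show ?thesis .
  qed
  have "?f {H, ?H'} = ?v"
  proof (cases "H = ?H'")
    case True
    then have "H = {}" "space M = {}" by blast+
    then show ?thesis by simp
  next
    case False
    then have "?f {H, ?H'} = \<bar>measure P H - measure R H\<bar> + \<bar>measure P ?H' - measure R ?H'\<bar>"
      by simp
    also have "\<dots> = ?v"
    proof -
      have "(space M - H) \<inter> H = {}" by blast
      with assms(5) H have "measure R ?H' \<le> measure P ?H'" by (simp add: hahn_set_def)
      moreover have "measure P H \<le> measure R H" using assms(5) H by (simp add: hahn_set_def)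
      ultimately show ?thesis by simp
    qed
    finally show ?thesis .
  qed
  moreover have "bdd_above (?f ` meas_partitions M)"
    using upper by (rule bdd_aboveI2)
  then have "?f {H, ?H'} \<le> (SUP Pt\<in>meas_partitions M. ?f Pt)"
    by (rule cSUP_upper[OF set_compl_in_meas_partitions[OF H(1)]])
  ultimately have "?v \<le> (SUP Pt\<in>meas_partitions M. ?f Pt)"
    by simp
  moreover have "(SUP Pt\<in>meas_partitions M. ?f Pt) \<le> ?v"
    using upper set_compl_in_meas_partitions[OF H(1)] by (intro cSUP_least) auto
  ultimately show ?thesis by (simp add: tv_dist_def tv_norm_def)
qed

lemma tv_dist_prob_hahn_set:
  assumes "prob_space P" "sets P = sets M" "prob_space R" "sets R = sets M" "hahn_set M P R H"
  shows "tv_dist M (measure P) (measure R) = 2 * (measure R H - measure P H)"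
proof -
  have H: "H \<in> sets M" using assms(5) by (simp add: hahn_set_def)
  have compl: "measure X (space M - H) = 1 - measure X H" if "prob_space X" "sets X = sets M" for X
    using that H prob_space.prob_compl[OF that(1), of H] sets_eq_imp_space_eq[OF that(2)] by simp
  show ?thesis
    using tv_dist_hahn_set[OF _ assms(2) _ assms(4,5)] assms(1,3)
    by (simp add: prob_space.axioms(1) compl[OF assms(1,2)] compl[OF assms(3,4)])
qed

lemma hahn_set_maximizes_diff:
  assumes P: "finite_measure P" "sets P = sets M" and R: "finite_measure R" "sets R = sets M"
    and "hahn_set M P R H" "B \<in> sets M"
  shows "measure R B - measure P B \<le> measure R H - measure P H"
proof -
  have H: "H \<in> sets M" using assms(5) by (simp add: hahn_set_def)
  have "B - H \<in> sets M" "(B - H) \<inter> H = {}" "H - B \<in> sets M" "H - B \<subseteq> H"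
    using H assms(6) by auto
  with assms(5) have "measure R (B - H) \<le> measure P (B - H)" "measure P (H - B) \<le> measure R (H - B)"
    by (simp_all add: hahn_set_def)
  moreover have "B \<inter> H = H \<inter> B" by blast
  ultimately show ?thesis
    using finite_measure_split[of P B H] finite_measure_split[of R B H]
      finite_measure_split[of P H B] finite_measure_split[of R H B] P R H assms(6)
    by simp
qed

section \<open>The optimal discriminator\<close>

definition disc_loss :: "'a measure \<Rightarrow> 'a measure \<Rightarrow> real \<Rightarrow> ('a \<Rightarrow> real) \<Rightarrow> ennreal" where
  "disc_loss P R a D = (\<integral>\<^sup>+ x. ennreal (D x) \<partial>P) + (\<integral>\<^sup>+ x. ennreal (max 0 (a - D x)) \<partial>R)"

lemma hinge_lower_bound:
  fixes p r :: ennreal and a d :: real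
  assumes "0 \<le> d"
  shows "ennreal a * min p r \<le> ennreal d * p + ennreal (max 0 (a - d)) * r"
proof -
  have "ennreal a \<le> ennreal (d + max 0 (a - d))" by (intro ennreal_leI) linarith
  then have "ennreal a * min p r \<le> (ennreal d + ennreal (max 0 (a - d))) * min p r"
    using assms by (intro mult_right_mono) (simp_all add: ennreal_plus)
  also have "\<dots> \<le> ennreal d * p + ennreal (max 0 (a - d)) * r"
    by (simp add: distrib_right add_mono mult_left_mono)
  finally show ?thesis .
qed

lemma disc_loss_density:
  assumes [measurable]: "p \<in> borel_measurable N" "r \<in> borel_measurable N" "D \<in> borel_measurable N"
  shows "disc_loss (density N p) (density N r) a D
    = (\<integral>\<^sup>+ x. ennreal (D x) * p x + ennreal (max 0 (a - D x)) * r x \<partial>N)"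
  by (simp add: disc_loss_def nn_integral_density nn_integral_add mult.commute)

lemma disc_loss_density_optimal:
  assumes [measurable]: "p \<in> borel_measurable N" "r \<in> borel_measurable N" "D \<in> borel_measurable N"
    and "\<forall>x\<in>space N. 0 \<le> D x" "0 \<le> a"
  defines "H \<equiv> {x \<in> space N. p x < r x}"
  shows "disc_loss (density N p) (density N r) a (\<lambda>x. a * indicator H x)
    \<le> disc_loss (density N p) (density N r) a D"
proof -
  have [measurable]: "H \<in> sets N" unfolding H_def by measurable
  have "ennreal (a * indicator H x) * p x + ennreal (max 0 (a - a * indicator H x)) * r x
      = ennreal a * min (p x) (r x)" if "x \<in> space N" for x
    using that \<open>0 \<le> a\<close> by (auto simp: H_def min_def indicator_def)
  then have "disc_loss (density N p) (density N r) a (\<lambda>x. a * indicator H x)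
      = (\<integral>\<^sup>+ x. ennreal a * min (p x) (r x) \<partial>N)"
    by (simp add: disc_loss_density cong: nn_integral_cong)
  also have "\<dots> \<le> disc_loss (density N p) (density N r) a D"
    using assms(4) unfolding disc_loss_density[OF assms(1-3)]
    by (intro nn_integral_mono hinge_lower_bound) simp
  finally show ?thesis .
qed

lemma hahn_set_density:
  assumes [measurable]: "p \<in> borel_measurable N" "r \<in> borel_measurable N"
    and P: "finite_measure (density N p)" and R: "finite_measure (density N r)"
  shows "hahn_set N (density N p) (density N r) {x \<in> space N. p x < r x}"
    (is "hahn_set N ?P ?R ?H")
proof -
  have le: "measure (density N f) B \<le> measure (density N g) B"
    if B: "B \<in> sets N" and fg: "\<forall>x\<in>B. f x \<le> g x"
      and f: "f \<in> borel_measurable N" "finite_measure (density N f)"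
      and g: "g \<in> borel_measurable N" "finite_measure (density N g)" for B f g
  proof -
    have "emeasure (density N f) B \<le> emeasure (density N g) B"
      using B f g fg by (auto simp: emeasure_density intro!: nn_integral_mono split: split_indicator)
    then show ?thesis
      by (simp add: finite_measure.emeasure_eq_measure[OF f(2)]
          finite_measure.emeasure_eq_measure[OF g(2)])
  qed
  show ?thesis
    unfolding hahn_set_def
  proof (intro conjI ballI impI)
    show "?H \<in> sets N" by measurable
    show "measure ?P B \<le> measure ?R B" if "B \<in> sets N" "B \<subseteq> ?H" for B
    proof (rule le)
      show "\<forall>x\<in>B. p x \<le> r x" using that(2) by (auto intro: less_imp_le)
    qed (use that P R in auto)
    show "measure ?R B \<le> measure ?P B" if "B \<in> sets N" "B \<inter> ?H = {}" for B
    proof (rule le)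
      have "B \<subseteq> space N" using that(1) by (rule sets.sets_into_space)
      then show "\<forall>x\<in>B. r x \<le> p x" using that(2) by (auto simp: not_less)
    qed (use that P R in auto)
  qed
qed

lemma common_density:
  assumes "finite_measure P" "sets P = sets M" "finite_measure R" "sets R = sets M"
  obtains N p r where "sets N = sets M" "p \<in> borel_measurable N" "r \<in> borel_measurable N"
    "density N p = P" "density N r = R"
proof -
  define N where "N = add_measure P R"
  have sets_N: "sets N = sets M" and R_N: "sets R = sets P"
    using assms by (simp_all add: N_def)
  have "emeasure N (space N) \<noteq> \<infinity>"
    using assms R_N by (simp add: N_def finite_measure.emeasure_finite)
  then interpret N: finite_measure N by (rule finite_measureI)
  have "absolutely_continuous N X" if "X = P \<or> X = R" for X
    using that R_N by (auto simp: absolutely_continuous_def N_def null_sets_def)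
  then have "\<exists>p\<in>borel_measurable N. density N p = P" "\<exists>r\<in>borel_measurable N. density N r = R"
    using assms sets_N by (auto intro!: N.Radon_Nikodym)
  with sets_N that show ?thesis by blast
qed

lemma hahn_set_exists:
  assumes "finite_measure P" "sets P = sets M" "finite_measure R" "sets R = sets M"
  obtains H where "hahn_set M P R H"
proof -
  obtain N p r where "sets N = sets M" "p \<in> borel_measurable N" "r \<in> borel_measurable N"
    "density N p = P" "density N r = R"
    using common_density[OF assms] .
  with hahn_set_density[of p N r] assms that show ?thesis
    by (simp add: hahn_set_def)
qed

lemma optimal_discriminator:
  assumes "finite_measure P" "sets P = sets M" "finite_measure R" "sets R = sets M" "0 \<le> a"
  obtains H where "hahn_set M P R H"
    "\<And>D. D \<in> borel_measurable M \<Longrightarrow> \<forall>x\<in>space M. 0 \<le> D x \<Longrightarrow>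
       disc_loss P R a (\<lambda>x. a * indicator H x) \<le> disc_loss P R a D"
proof -
  obtain N p r where N: "sets N = sets M"
    and [measurable]: "p \<in> borel_measurable N" "r \<in> borel_measurable N" and P: "density N p = P" and R: "density N r = R"
    using common_density[OF assms(1-4)] .
  define H where "H = {x \<in> space N. p x < r x}"
  have "hahn_set N P R H"
    using hahn_set_density[of p N r] assms P R by (simp add: H_def)
  then have "hahn_set M P R H"
    using N by (simp add: hahn_set_def)
  moreover have "disc_loss P R a (\<lambda>x. a * indicator H x) \<le> disc_loss P R a D"
    if "D \<in> borel_measurable M" "\<forall>x\<in>space M. 0 \<le> D x" for D
    using disc_loss_density_optimal[of p N r D a] that assms(5) P R N sets_eq_imp_space_eq[OF N]
    by (simp add: H_def measurable_cong_sets[OF N refl])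
  ultimately show ?thesis by (rule that)
qed

lemma disc_loss_indicator:
  assumes "prob_space P" "sets P = sets M" "prob_space R" "sets R = sets M" "H \<in> sets M" "0 \<le> a"
  shows "disc_loss P R a (\<lambda>x. a * indicator H x)
    = ennreal (a * measure P H + a * measure R (space M - H))"
proof -
  interpret P: prob_space P by fact
  interpret R: prob_space R by fact
  have "integral\<^sup>N X (\<lambda>x. ennreal (a * indicator H x)) = ennreal a * emeasure X H"
    if "sets X = sets M" for X
    using that assms(5,6)
    by (simp add: ennreal_mult' ennreal_indicator nn_integral_cmult_indicator del: ennreal_mult'')
  moreover have "integral\<^sup>N X (\<lambda>x. ennreal (max 0 (a - a * indicator H x)))
      = ennreal a * emeasure X (space M - H)" if "sets X = sets M" for X
  proof -
    have "integral\<^sup>N X (\<lambda>x. ennreal (max 0 (a - a * indicator H x)))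
        = integral\<^sup>N X (\<lambda>x. ennreal a * indicator (space M - H) x)"
      using assms(6) sets_eq_imp_space_eq[OF that]
      by (intro nn_integral_cong) (auto split: split_indicator)
    then show ?thesis
      using that assms(5) by (simp add: nn_integral_cmult_indicator)
  qed
  ultimately show ?thesis
    using assms
    by (simp add: disc_loss_def P.emeasure_eq_measure R.emeasure_eq_measure ennreal_mult'[symmetric]
        ennreal_plus[symmetric] del: ennreal_plus)
qed

lemma inf_disc_loss:
  assumes "prob_space P" "sets P = sets M" "prob_space R" "sets R = sets M" "0 \<le> a"
  defines "v \<equiv> ennreal (a - a / 2 * tv_dist M (measure P) (measure R))"
  shows "(INF D\<in>{D \<in> borel_measurable M. \<forall>x\<in>space M. 0 \<le> D x}. disc_loss P R a D) = v"
    and "\<exists>D\<in>borel_measurable M. (\<forall>x\<in>space M. 0 \<le> D x \<and> D x \<le> a) \<and> disc_loss P R a D = v"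
proof -
  have fin: "finite_measure P" "finite_measure R"
    using assms(1,3) by (simp_all add: prob_space.axioms(1))
  obtain H where hahn: "hahn_set M P R H" and opt: "\<And>D. D \<in> borel_measurable M \<Longrightarrow>
      \<forall>x\<in>space M. 0 \<le> D x \<Longrightarrow> disc_loss P R a (\<lambda>x. a * indicator H x) \<le> disc_loss P R a D"
    using optimal_discriminator[OF fin(1) assms(2) fin(2) assms(4,5)] by blast
  define D\<^sub>H where "D\<^sub>H = (\<lambda>x. a * indicator H x :: real)"
  have H: "H \<in> sets M" using hahn by (simp add: hahn_set_def)
  have D\<^sub>H: "D\<^sub>H \<in> borel_measurable M" "\<forall>x\<in>space M. 0 \<le> D\<^sub>H x \<and> D\<^sub>H x \<le> a"
    using H assms(5) unfolding D\<^sub>H_def by (measurable, simp add: indicator_def)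
  have "measure R (space M - H) = 1 - measure R H"
    using prob_space.prob_compl[OF assms(3), of H] H assms(4) sets_eq_imp_space_eq[OF assms(4)] by simp
  then have "a * measure P H + a * measure R (space M - H) = a - a / 2 * tv_dist M (measure P) (measure R)"
    unfolding tv_dist_prob_hahn_set[OF assms(1-4) hahn] by (simp add: right_diff_distrib)
  then have loss_D\<^sub>H: "disc_loss P R a D\<^sub>H = v"
    using disc_loss_indicator[OF assms(1-4) H assms(5)] by (simp add: v_def D\<^sub>H_def)
  show "\<exists>D\<in>borel_measurable M. (\<forall>x\<in>space M. 0 \<le> D x \<and> D x \<le> a) \<and> disc_loss P R a D = v"
    using D\<^sub>H loss_D\<^sub>H by blast
  show "(INF D\<in>{D \<in> borel_measurable M. \<forall>x\<in>space M. 0 \<le> D x}. disc_loss P R a D) = v"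
  proof (rule antisym)
    show "(INF D\<in>{D \<in> borel_measurable M. \<forall>x\<in>space M. 0 \<le> D x}. disc_loss P R a D) \<le> v"
      using D\<^sub>H loss_D\<^sub>H by (intro INF_lower2[of D\<^sub>H]) auto
    show "v \<le> (INF D\<in>{D \<in> borel_measurable M. \<forall>x\<in>space M. 0 \<le> D x}. disc_loss P R a D)"
      using opt loss_D\<^sub>H by (intro INF_greatest) (auto simp: D\<^sub>H_def)
  qed
qed

section \<open>Mixtures\<close>

definition mixture :: "real \<Rightarrow> 'a measure \<Rightarrow> 'a measure \<Rightarrow> 'a measure" where
  "mixture \<gamma> Q P = add_measure (scale_measure (ennreal \<gamma>) Q) (scale_measure (ennreal (1 - \<gamma>)) P)"

lemma sets_mixture [simp, measurable_cong]: "sets (mixture \<gamma> Q P) = sets Q"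
  and space_mixture [simp]: "space (mixture \<gamma> Q P) = space Q"
  by (simp_all add: mixture_def space_scale_measure)

lemma emeasure_mixture:
  "sets P = sets Q \<Longrightarrow>
    emeasure (mixture \<gamma> Q P) A = ennreal \<gamma> * emeasure Q A + ennreal (1 - \<gamma>) * emeasure P A"
  by (simp add: mixture_def)

lemma nn_integral_mixture:
  assumes "sets P = sets Q" "f \<in> borel_measurable Q"
  shows "(\<integral>\<^sup>+ x. f x \<partial>mixture \<gamma> Q P)
    = ennreal \<gamma> * (\<integral>\<^sup>+ x. f x \<partial>Q) + ennreal (1 - \<gamma>) * (\<integral>\<^sup>+ x. f x \<partial>P)"
  using assms by (simp add: mixture_def nn_integral_add_measure nn_integral_scale_measure
      measurable_cong_sets[OF assms(1) refl])

lemma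
  assumes "prob_space Q" "prob_space P" "sets P = sets Q" "0 \<le> \<gamma>" "\<gamma> \<le> 1"
  shows prob_space_mixture: "prob_space (mixture \<gamma> Q P)"
    and measure_mixture: "measure (mixture \<gamma> Q P) A = \<gamma> * measure Q A + (1 - \<gamma>) * measure P A"
proof -
  interpret Q: prob_space Q by fact
  interpret P: prob_space P by fact
  have "emeasure (mixture \<gamma> Q P) A = ennreal (\<gamma> * measure Q A + (1 - \<gamma>) * measure P A)" for A
    using assms
    by (simp add: emeasure_mixture Q.emeasure_eq_measure P.emeasure_eq_measure
        ennreal_mult'[symmetric] ennreal_plus[symmetric] del: ennreal_plus)
  then show "measure (mixture \<gamma> Q P) A = \<gamma> * measure Q A + (1 - \<gamma>) * measure P A"
    using assms by (intro measure_eq_emeasure_eq_ennreal) simp_all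
  show "prob_space (mixture \<gamma> Q P)"
    using assms P.emeasure_space_1 sets_eq_imp_space_eq[OF assms(3)]
    by (intro prob_spaceI)
       (simp add: emeasure_mixture Q.emeasure_space_1 ennreal_plus[symmetric] del: ennreal_plus)
qed

lemma loss_D_eq_disc_loss_mixture:
  assumes "sets Pm = sets Q" "D \<in> borel_measurable Q"
  shows "loss_D Pp Pm a \<gamma> D Q = disc_loss Pp (mixture \<gamma> Q Pm) a D"
proof -
  have "(\<lambda>x. ennreal (max 0 (a - D x))) \<in> borel_measurable Q"
    using assms(2) by measurable
  with assms(1) show ?thesis
    by (simp add: loss_D_def disc_loss_def nn_integral_mixture add.assoc)
qed

lemma tv_dist_mixture_lower_bound:
  assumes P: "prob_space P" "sets P = sets M" and Q: "prob_space Q" "sets Q = sets M"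
    and Pm: "prob_space Pm" "sets Pm = sets M"
    and S: "S \<in> sets M" "measure P S = 1" "measure Pm S = 0" and "0 \<le> \<gamma>" "\<gamma> \<le> 1"
  shows "2 * (1 - \<gamma>) \<le> tv_dist M (measure P) (measure (mixture \<gamma> Q Pm))"
proof -
  define R where "R = mixture \<gamma> Q Pm"
  have R: "prob_space R" "sets R = sets M"
    using prob_space_mixture[OF Q(1) Pm(1)] assms by (simp_all add: R_def)
  have fin: "finite_measure P" "finite_measure R"
    using P(1) R(1) by (simp_all add: prob_space.axioms(1))
  obtain H where hahn: "hahn_set M P R H"
    using hahn_set_exists[OF fin(1) P(2) fin(2) R(2)] .
  have compl: "measure X (space M - S) = 1 - measure X S" if "prob_space X" "sets X = sets M" for X
    using that S(1) prob_space.prob_compl[OF that(1), of S] sets_eq_imp_space_eq[OF that(2)] by simp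
  have "1 - \<gamma> \<le> measure R (space M - S) - measure P (space M - S)"
    using compl[OF P] compl[OF Pm] S assms(10,11) measure_nonneg[of Q "space M - S"]
    by (simp add: R_def measure_mixture[OF Q(1) Pm(1)] Pm(2) Q(2))
  also have "\<dots> \<le> measure R H - measure P H"
    using S(1) by (intro hahn_set_maximizes_diff[OF fin(1) P(2) fin(2) R(2) hahn]) auto
  finally show ?thesis
    using tv_dist_prob_hahn_set[OF P R hahn] by (simp add: R_def)
qed

lemma tv_dist_self_mixture_upper_bound:
  assumes P: "prob_space P" "sets P = sets M" and Pm: "prob_space Pm" "sets Pm = sets M"
    and "0 \<le> \<gamma>" "\<gamma> \<le> 1"
  shows "tv_dist M (measure P) (measure (mixture \<gamma> P Pm)) \<le> 2 * (1 - \<gamma>)"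
proof -
  define R where "R = mixture \<gamma> P Pm"
  have R: "prob_space R" "sets R = sets M"
    using prob_space_mixture[OF P(1) Pm(1)] assms by (simp_all add: R_def)
  have fin: "finite_measure P" "finite_measure R"
    using P(1) R(1) by (simp_all add: prob_space.axioms(1))
  obtain H where hahn: "hahn_set M P R H"
    using hahn_set_exists[OF fin(1) P(2) fin(2) R(2)] .
  have "measure R H - measure P H = (1 - \<gamma>) * (measure Pm H - measure P H)"
    using assms by (simp add: R_def measure_mixture algebra_simps)
  also have "\<dots> \<le> 1 - \<gamma>"
  proof (rule mult_left_le)
    show "measure Pm H - measure P H \<le> 1"
      using prob_space.prob_le_1[OF Pm(1), of H] measure_nonneg[of P H] by linarith
  qed (use assms in simp)
  finally show ?thesis
    using tv_dist_prob_hahn_set[OF P R hahn] by (simp add: R_def)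
qed

theorem mainTheorem3:
  fixes M Pp Pm Q :: "'a measure" and a \<gamma> :: real
  assumes "prob_space Pp" "prob_space Pm" "prob_space Q"
    and "sets Pp = sets M" "sets Pm = sets M" "sets Q = sets M"
    and "\<exists>S\<in>sets M. prob_space.prob Pp S = 1 \<and> prob_space.prob Pm S = 0"
    and "a > 0" "0 < \<gamma>" "\<gamma> \<le> 1"
  shows "(INF D\<in>{D \<in> borel_measurable M. \<forall>x\<in>space M. 0 \<le> D x}. loss_D Pp Pm a \<gamma> D Q)
           = ennreal (a - a / 2 * tv_dist M (measure Pp)
                 (\<lambda>A. \<gamma> * measure Q A + (1 - \<gamma>) * measure Pm A)) \<and>
         (\<exists>D \<in> borel_measurable M. (\<forall>x\<in>space M. 0 \<le> D x \<and> D x \<le> a) \<and>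
           loss_D Pp Pm a \<gamma> D Q = ennreal (a - a / 2 * tv_dist M (measure Pp)
                 (\<lambda>A. \<gamma> * measure Q A + (1 - \<gamma>) * measure Pm A))) \<and>
         tv_dist M (measure Pp) (\<lambda>A. \<gamma> * measure Q A + (1 - \<gamma>) * measure Pm A) \<ge> 2 * (1 - \<gamma>) \<and>
         tv_dist M (measure Pp) (\<lambda>A. \<gamma> * measure Pp A + (1 - \<gamma>) * measure Pm A) = 2 * (1 - \<gamma>)"
proof -
  obtain S where S: "S \<in> sets M" "measure Pp S = 1" "measure Pm S = 0"
    using assms(7) by auto
  have \<gamma>: "0 \<le> \<gamma>" "\<gamma> \<le> 1" using assms(9,10) by simp_all
  have mix: "(\<lambda>A. \<gamma> * measure X A + (1 - \<gamma>) * measure Pm A) = measure (mixture \<gamma> X Pm)"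
    if "prob_space X" "sets X = sets M" for X
    using that assms(2,5) \<gamma> by (intro ext) (simp add: measure_mixture)
  have R: "prob_space (mixture \<gamma> Q Pm)" "sets (mixture \<gamma> Q Pm) = sets M"
    using prob_space_mixture[OF assms(3,2)] assms(5,6) \<gamma> by simp_all
  have loss: "loss_D Pp Pm a \<gamma> D Q = disc_loss Pp (mixture \<gamma> Q Pm) a D"
    if "D \<in> borel_measurable M" for D
    using that assms(5,6) measurable_cong_sets[OF assms(6) refl, where N=borel]
    by (simp add: loss_D_eq_disc_loss_mixture)
  have "(INF D\<in>{D \<in> borel_measurable M. \<forall>x\<in>space M. 0 \<le> D x}. loss_D Pp Pm a \<gamma> D Q)
      = (INF D\<in>{D \<in> borel_measurable M. \<forall>x\<in>space M. 0 \<le> D x}. disc_loss Pp (mixture \<gamma> Q Pm) a D)"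
    using loss by (intro INF_cong) simp_all
  moreover note inf_disc_loss[OF assms(1,4) R less_imp_le[OF assms(8)]]
  moreover note tv_dist_mixture_lower_bound[OF assms(1,4) assms(3,6) assms(2,5) S \<gamma>]
  moreover have "tv_dist M (measure Pp) (measure (mixture \<gamma> Pp Pm)) = 2 * (1 - \<gamma>)"
    using tv_dist_mixture_lower_bound[OF assms(1,4) assms(1,4) assms(2,5) S \<gamma>]
      tv_dist_self_mixture_upper_bound[OF assms(1,4) assms(2,5) \<gamma>] by linarith
  ultimately show ?thesis
    unfolding mix[OF assms(3,6)] mix[OF assms(1,4)] using loss by auto
qed

end
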